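(* The $\mathbb F$-algebra $\Delta$ has a presentation by generators $A$, $B$, $\gamma$ and relations \begin{gather*} A^3B-[3]_q A^2BA+[3]_q ABA^2-BA^3 = -(q^2-q^{-2})^2(AB-BA),\\ B^3A-[3]_q B^2AB+[3]_q BAB^2-AB^3 = -(q^2-q^{-2})^2(BA-AB),\\ A^2B^2-B^2A^2+(q^2+q^{-2})(BABA-ABAB) = -(q-q^{-1})^2(AB-BA)\gamma,\\ \gamma A = A\gamma,\qquad \gamma B = B\gamma. \end{gather*}
   Context: Let $\mathbb F$ be a field and fix a nonzero $q\in\mathbb F$ with $q^4\neq 1$. Algebras are associative with 1. The universal Askey--Wilson algebra $\Delta=\Delta_q$ is the $\mathbb F$-algebra with generators $A,B,C$ subject to the relations that each of $A+\frac{qBC-q^{-1}CB}{q^2-q^{-2}}$, $B+\frac{qCA-q^{-1}AC}{q^2-q^{-2}}$, $C+\frac{qAB-q^{-1}BA}{q^2-q^{-2}}$ is central in $\Delta$. Define $\alpha,\beta,\gamma$ by multiplying these three central elements (in this order) by $q+q^{-1}$; so e.g. $C+\frac{qAB-q^{-1}BA}{q^2-q^{-2}}=\frac{\gamma}{q+q^{-1}}$. Here $[n]_q=\frac{q^n-q^{-n}}{q-q^{-1}}$. *)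

theory Defs
  imports Main "HOL-Library.Poly_Mapping"
begin

text \<open>Words over an alphabet 'g form a (noncommutative) monoid under concatenation;
  we write it additively so that Poly_Mapping's convolution product applies.
  The free associative algebra on 'g over 'k is then ('g word =>0 'k).\<close>

datatype 'g word = Word "'g list"

fun word_list :: "'g word \<Rightarrow> 'g list" where
  "word_list (Word u) = u"

instantiation word :: (type) monoid_add
begin
definition zero_word_def: "0 = Word []"
definition plus_word_def: "x + y = Word (word_list x @ word_list y)"
instance
proof
  fix x y z :: "'a word"
  show "x + y + z = x + (y + z)" by (simp add: plus_word_def)
  show "0 + x = x" by (cases x) (simp add: plus_word_def zero_word_def)
  show "x + 0 = x" by (cases x) (simp add: plus_word_def zero_word_def)
qed
end

type_synonym ('g, 'k) freealg = "'g word \<Rightarrow>\<^sub>0 'k"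

definition sc :: "'k::ring_1 \<Rightarrow> ('g, 'k) freealg" where
  "sc c = Poly_Mapping.single 0 c"

definition gen :: "'g \<Rightarrow> ('g, 'k::ring_1) freealg" where
  "gen x = Poly_Mapping.single (Word [x]) 1"

definition fsubst :: "('g \<Rightarrow> ('h, 'k::ring_1) freealg) \<Rightarrow> ('g, 'k) freealg \<Rightarrow> ('h, 'k) freealg" where
  "fsubst \<sigma> p = (\<Sum>w\<in>Poly_Mapping.keys p. sc (Poly_Mapping.lookup p w) * prod_list (map \<sigma> (word_list w)))"

inductive_set ideal_gen :: "'a::ring_1 set \<Rightarrow> 'a set" for S where
  zero: "0 \<in> ideal_gen S"
| gen: "s \<in> S \<Longrightarrow> a * s * b \<in> ideal_gen S"
| add: "x \<in> ideal_gen S \<Longrightarrow> y \<in> ideal_gen S \<Longrightarrow> x + y \<in> ideal_gen S"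

definition qint :: "'k::field \<Rightarrow> nat \<Rightarrow> 'k" where
  "qint q n = (q ^ n - inverse q ^ n) / (q - inverse q)"

definition commut :: "'a::ring \<Rightarrow> 'a \<Rightarrow> 'a" where
  "commut x y = x * y - y * x"

datatype gABC = XA | XB | XC
datatype gABG = YA | YB | YG

text \<open>The three elements required to be central in Delta (alpha, beta, gamma divided by q+q^-1).\<close>
definition aw_cent :: "'k::field \<Rightarrow> ('g, 'k) freealg \<Rightarrow> ('g, 'k) freealg \<Rightarrow> ('g, 'k) freealg
    \<Rightarrow> ('g, 'k) freealg" where
  "aw_cent q x y z = x + sc (inverse (q^2 - inverse q ^ 2)) * (sc q * y * z - sc (inverse q) * z * y)"

definition delta_rels :: "'k::field \<Rightarrow> (gABC, 'k) freealg set" where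
  "delta_rels q = {commut z (gen x) | z x.
      z \<in> {aw_cent q (gen XA) (gen XB) (gen XC),
           aw_cent q (gen XB) (gen XC) (gen XA),
           aw_cent q (gen XC) (gen XA) (gen XB)}}"

definition aw_gamma :: "'k::field \<Rightarrow> (gABC, 'k) freealg" where
  "aw_gamma q = sc (q + inverse q) * aw_cent q (gen XC) (gen XA) (gen XB)"

text \<open>Relations of the new presentation, each written as LHS - RHS.\<close>
definition pres_rels :: "'k::field \<Rightarrow> (gABG, 'k) freealg set" where
  "pres_rels q = (let A = gen YA; B = gen YB; G = gen YG; t = sc (qint q 3) in
     { A^3*B - t*A^2*B*A + t*A*B*A^2 - B*A^3 + sc ((q^2 - inverse q ^ 2)^2) * (A*B - B*A),
       B^3*A - t*B^2*A*B + t*B*A*B^2 - A*B^3 + sc ((q^2 - inverse q ^ 2)^2) * (B*A - A*B),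
       A^2*B^2 - B^2*A^2 + sc (q^2 + inverse q ^ 2) * (B*A*B*A - A*B*A*B)
         + sc ((q - inverse q)^2) * (A*B - B*A) * G,
       G*A - A*G,
       G*B - B*G })"

definition pres_map :: "'k::field \<Rightarrow> (gABG, 'k) freealg \<Rightarrow> (gABC, 'k) freealg" where
  "pres_map q = fsubst (\<lambda>y. case y of YA \<Rightarrow> gen XA | YB \<Rightarrow> gen XB | YG \<Rightarrow> aw_gamma q)"

end

theory Submission
  imports Defs
begin

text \<open>Solving the defining relation of gamma for C, i.e.
  C = gamma/(q + q^-1) - (qAB - q^-1 BA)/(q^2 - q^-2), gives a substitution of the free algebra
  on A, B, C into the free algebra on A, B, gamma that is inverse to the natural map. It therefore
  suffices that each of the two substitutions maps the defining relations of its source into the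
  ideal of its target. The images of the new relations are explicit combinations of the
  commutators of alpha, beta, gamma with A and B. Conversely, gamma is central modulo the new
  relations, and the commutators of the images of alpha and beta with A and B are explicit
  combinations of the new relations; since commutation with a fixed element is a derivation,
  this makes the images of alpha, beta and gamma central.\<close>

lemma sc_add: "sc (a + b) = sc a + (sc b :: ('g, 'k::ring_1) freealg)"
  by (simp add: sc_def single_add)

lemma sc_mult: "sc (a * b) = sc a * (sc b :: ('g, 'k::ring_1) freealg)"
  by (simp add: sc_def mult_single)

lemma sc_0 [simp]: "sc 0 = (0 :: ('g, 'k::ring_1) freealg)"
  by (simp add: sc_def)

lemma sc_1 [simp]: "sc 1 = (1 :: ('g, 'k::ring_1) freealg)"
  by (simp add: sc_def)

lemma poly_mapping_sum_single: "(\<Sum>w\<in>Poly_Mapping.keys p. Poly_Mapping.single w (Poly_Mapping.lookup p w)) = p"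
  by (rule poly_mapping_eqI) (simp add: lookup_sum lookup_single when_def in_keys_iff)

lemma sc_commute: "sc c * x = x * (sc c :: ('g, 'k::comm_ring_1) freealg)"
proof -
  have "sc c * x = (\<Sum>w\<in>Poly_Mapping.keys x. sc c * Poly_Mapping.single w (Poly_Mapping.lookup x w))"
    by (subst poly_mapping_sum_single[of x, symmetric]) (simp add: sum_distrib_left)
  also have "\<dots> = (\<Sum>w\<in>Poly_Mapping.keys x. Poly_Mapping.single w (Poly_Mapping.lookup x w) * sc c)"
    by (simp add: sc_def mult_single mult.commute)
  also have "\<dots> = x * sc c"
    by (simp add: sum_distrib_right[symmetric] poly_mapping_sum_single)
  finally show ?thesis .
qed

lemma word_list_plus: "word_list (u + v) = word_list u @ word_list v"
  by (simp add: plus_word_def)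

lemma word_list_0: "word_list 0 = []"
  by (simp add: zero_word_def)

abbreviation subst_word :: "('g \<Rightarrow> ('h, 'k::ring_1) freealg) \<Rightarrow> 'g word \<Rightarrow> ('h, 'k) freealg" where
  "subst_word \<sigma> w \<equiv> prod_list (map \<sigma> (word_list w))"

lemma fsubst_superset:
  assumes "finite S" "Poly_Mapping.keys p \<subseteq> S"
  shows "fsubst \<sigma> p = (\<Sum>w\<in>S. sc (Poly_Mapping.lookup p w) * subst_word \<sigma> w)"
  unfolding fsubst_def
  by (rule sum.mono_neutral_left) (use assms in \<open>auto simp: in_keys_iff\<close>)

lemma fsubst_add: "fsubst \<sigma> (p + r) = fsubst \<sigma> p + fsubst \<sigma> r"
proof -
  let ?S = "Poly_Mapping.keys p \<union> Poly_Mapping.keys r"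
  have "fsubst \<sigma> (p + r) = (\<Sum>w\<in>?S. sc (Poly_Mapping.lookup (p + r) w) * subst_word \<sigma> w)"
    by (rule fsubst_superset) (auto dest: set_mp[OF keys_add])
  also have "\<dots> = (\<Sum>w\<in>?S. sc (Poly_Mapping.lookup p w) * subst_word \<sigma> w)
      + (\<Sum>w\<in>?S. sc (Poly_Mapping.lookup r w) * subst_word \<sigma> w)"
    by (simp add: lookup_add sc_add distrib_right sum.distrib)
  also have "\<dots> = fsubst \<sigma> p + fsubst \<sigma> r"
    by (subst (1 2) fsubst_superset[symmetric]) auto
  finally show ?thesis .
qed

lemma fsubst_0: "fsubst \<sigma> 0 = 0"
  by (simp add: fsubst_def)

lemma fsubst_uminus: "fsubst \<sigma> (- p) = - fsubst \<sigma> p"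
  using fsubst_add[of \<sigma> "- p" p] by (simp add: fsubst_0 eq_neg_iff_add_eq_0)

lemma fsubst_diff: "fsubst \<sigma> (p - r) = fsubst \<sigma> p - fsubst \<sigma> r"
  using fsubst_add[of \<sigma> p "- r"] by (simp add: fsubst_uminus)

lemma fsubst_single: "fsubst \<sigma> (Poly_Mapping.single w c) = sc c * subst_word \<sigma> w"
  by (subst fsubst_superset[where S = "{w}"]) auto

lemma fsubst_sum: "fsubst \<sigma> (\<Sum>i\<in>I. f i) = (\<Sum>i\<in>I. fsubst \<sigma> (f i))"
  by (induction I rule: infinite_finite_induct) (auto simp: fsubst_0 fsubst_add)

lemma fsubst_mult:
  fixes \<sigma> :: "'g \<Rightarrow> ('h, 'k::comm_ring_1) freealg"
  shows "fsubst \<sigma> (p * r) = fsubst \<sigma> p * fsubst \<sigma> r"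
proof -
  have single_mult: "sc (a * b) * subst_word \<sigma> (u + v) = (sc a * subst_word \<sigma> u) * (sc b * subst_word \<sigma> v)"
    for a b u v
    by (simp add: word_list_plus sc_mult mult.assoc) (metis mult.assoc sc_commute)
  have "p * r = (\<Sum>u\<in>Poly_Mapping.keys p. \<Sum>v\<in>Poly_Mapping.keys r.
      Poly_Mapping.single (u + v) (Poly_Mapping.lookup p u * Poly_Mapping.lookup r v))"
    by (subst (1) poly_mapping_sum_single[of p, symmetric], subst (1) poly_mapping_sum_single[of r, symmetric])
      (simp add: sum_product mult_single)
  then show ?thesis
    by (simp add: fsubst_sum fsubst_single single_mult fsubst_def[of \<sigma> p] fsubst_def[of \<sigma> r] sum_product)
qed

lemma fsubst_1: "fsubst \<sigma> 1 = 1"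
  using fsubst_single[of \<sigma> 0 1] by (simp add: word_list_0)

lemma fsubst_sc: "fsubst \<sigma> (sc c) = sc c"
  using fsubst_single[of \<sigma> 0 c] by (simp add: sc_def word_list_0)

lemma fsubst_gen: "fsubst \<sigma> (gen x) = \<sigma> x"
  using fsubst_single[of \<sigma> "Word [x]" 1] by (simp add: gen_def)

lemma fsubst_power:
  fixes \<sigma> :: "'g \<Rightarrow> ('h, 'k::comm_ring_1) freealg"
  shows "fsubst \<sigma> (p ^ n) = fsubst \<sigma> p ^ n"
  by (induction n) (simp_all add: fsubst_1 fsubst_mult)

lemma fsubst_commut:
  fixes \<sigma> :: "'g \<Rightarrow> ('h, 'k::comm_ring_1) freealg"
  shows "fsubst \<sigma> (commut x y) = commut (fsubst \<sigma> x) (fsubst \<sigma> y)"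
  by (simp add: commut_def fsubst_diff fsubst_mult)

lemmas fsubst_simps = fsubst_add fsubst_0 fsubst_uminus fsubst_diff fsubst_mult fsubst_1
  fsubst_sc fsubst_gen fsubst_power fsubst_commut

lemma fsubst_prod_list:
  fixes \<tau> :: "'g \<Rightarrow> ('h, 'k::comm_ring_1) freealg"
  shows "fsubst \<tau> (prod_list xs) = prod_list (map (fsubst \<tau>) xs)"
  by (induction xs) (simp_all add: fsubst_1 fsubst_mult)

lemma fsubst_fsubst:
  fixes \<tau> :: "'h \<Rightarrow> ('i, 'k::comm_ring_1) freealg"
  shows "fsubst \<tau> (fsubst \<sigma> p) = fsubst (\<lambda>x. fsubst \<tau> (\<sigma> x)) p"
  by (simp add: fsubst_def[of \<sigma>] fsubst_def[of "\<lambda>x. fsubst \<tau> (\<sigma> x)"]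
      fsubst_sum fsubst_mult fsubst_sc fsubst_prod_list comp_def)

lemma prod_list_map_gen: "prod_list (map gen l) = (Poly_Mapping.single (Word l) 1 :: ('g, 'k::ring_1) freealg)"
  by (induction l) (simp_all add: zero_word_def[symmetric] gen_def mult_single plus_word_def)

lemma fsubst_gen_id: "fsubst gen p = (p :: ('g, 'k::ring_1) freealg)"
proof -
  have "sc (Poly_Mapping.lookup p w) * subst_word gen w = Poly_Mapping.single w (Poly_Mapping.lookup p w)" for w
    by (cases w) (simp add: prod_list_map_gen sc_def mult_single)
  then show ?thesis
    by (simp add: fsubst_def poly_mapping_sum_single)
qed

lemma fsubst_mem_subalgebra:
  assumes "\<And>x. \<sigma> x \<in> R" "\<And>c. sc c \<in> R"
    and "\<And>x y. x \<in> R \<Longrightarrow> y \<in> R \<Longrightarrow> x + y \<in> R" "\<And>x y. x \<in> R \<Longrightarrow> y \<in> R \<Longrightarrow> x * y \<in> R"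
  shows "fsubst \<sigma> p \<in> R"
proof -
  have "subst_word \<sigma> w \<in> R" for w
  proof (induction "word_list w" arbitrary: w)
    case Nil
    then show ?case using assms(2)[of 1] by simp
  next
    case (Cons x l)
    then show ?case by (metis assms(1,4) list.simps(9) prod_list.Cons word_list.simps)
  qed
  moreover have "0 \<in> R" using assms(2)[of 0] by simp
  ultimately have "(\<Sum>w\<in>W. sc (Poly_Mapping.lookup p w) * subst_word \<sigma> w) \<in> R" for W
    by (induction W rule: infinite_finite_induct) (auto intro: assms)
  then show ?thesis
    unfolding fsubst_def .
qed

lemma ideal_gen_mult_left: "x \<in> ideal_gen S \<Longrightarrow> c * x \<in> ideal_gen S"
proof (induction rule: ideal_gen.induct)
  case (gen s a b)
  then show ?case using ideal_gen.gen[of s S "c * a" b] by (simp add: mult.assoc)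
qed (simp_all add: ideal_gen.zero distrib_left ideal_gen.add)

lemma ideal_gen_mult_right: "x \<in> ideal_gen S \<Longrightarrow> x * c \<in> ideal_gen S"
proof (induction rule: ideal_gen.induct)
  case (gen s a b)
  then show ?case using ideal_gen.gen[of s S a "b * c"] by (simp add: mult.assoc)
qed (simp_all add: ideal_gen.zero distrib_right ideal_gen.add)

lemma ideal_gen_generator: "s \<in> S \<Longrightarrow> s \<in> ideal_gen S"
  using ideal_gen.gen[of s S 1 1] by simp

lemma ideal_gen_diff: "x \<in> ideal_gen S \<Longrightarrow> y \<in> ideal_gen S \<Longrightarrow> x - y \<in> ideal_gen S"
  using ideal_gen.add[of x S "- y"] ideal_gen_mult_left[of y S "- 1"] by simp

lemmas ideal_gen_closed = ideal_gen.zero ideal_gen.add ideal_gen_diff ideal_gen_mult_left ideal_gen_mult_right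

lemma fsubst_ideal_gen:
  fixes \<sigma> :: "'g \<Rightarrow> ('h, 'k::comm_ring_1) freealg"
  assumes "\<And>s. s \<in> S \<Longrightarrow> fsubst \<sigma> s \<in> ideal_gen T" and "p \<in> ideal_gen S"
  shows "fsubst \<sigma> p \<in> ideal_gen T"
  using assms(2)
proof induction
  case (gen s a b)
  then show ?case
    by (simp add: fsubst_mult assms(1) ideal_gen_mult_left ideal_gen_mult_right)
qed (simp_all add: fsubst_0 fsubst_add ideal_gen.zero ideal_gen.add)

lemma commut_swap: "commut u z = - commut z (u :: 'a::ring)"
  by (simp add: commut_def)

lemma commut_self [simp]: "commut z (z :: 'a::ring) = 0"
  by (simp add: commut_def)

lemma commut_sc_left: "commut (sc c * z) u = sc c * commut z (u :: ('g, 'k::comm_ring_1) freealg)"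
  by (simp add: commut_def right_diff_distrib mult.assoc) (metis mult.assoc sc_commute)

lemma commut_in_ideal_gen_swap: "commut z u \<in> ideal_gen S \<Longrightarrow> commut u z \<in> ideal_gen S"
  using ideal_gen_mult_left[of "commut z u" S "- 1"] by (subst commut_swap) simp

text \<open>The elements u with commut z u in the ideal form a subalgebra, as commut z is a derivation.\<close>

lemma commut_in_ideal_gen_if_generators:
  fixes z :: "('g, 'k::comm_ring_1) freealg"
  assumes "\<And>x. commut z (gen x) \<in> ideal_gen S"
  shows "commut z p \<in> ideal_gen S"
proof -
  have "fsubst gen p \<in> {u. commut z u \<in> ideal_gen S}"
  proof (rule fsubst_mem_subalgebra)
    show "sc c \<in> {u. commut z u \<in> ideal_gen S}" for c
      by (simp add: commut_def sc_commute ideal_gen.zero)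
    show "x * y \<in> {u. commut z u \<in> ideal_gen S}"
      if "x \<in> {u. commut z u \<in> ideal_gen S}" "y \<in> {u. commut z u \<in> ideal_gen S}" for x y
    proof -
      have "commut z (x * y) = commut z x * y + x * commut z y"
        by (simp add: commut_def algebra_simps)
      with that show ?thesis by (simp add: ideal_gen_closed)
    qed
    show "x + y \<in> {u. commut z u \<in> ideal_gen S}"
      if "x \<in> {u. commut z u \<in> ideal_gen S}" "y \<in> {u. commut z u \<in> ideal_gen S}" for x y
    proof -
      have "commut z (x + y) = commut z x + commut z y"
        by (simp add: commut_def algebra_simps)
      with that show ?thesis by (simp add: ideal_gen.add)
    qed
  qed (use assms in blast)
  then show ?thesis unfolding fsubst_gen_id by blast
qed

text \<open>The simplifier unfolds all_words_upto n by case analysis on the first letter at most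
  n times. Comparing coefficients word by word this way reduces an identity of degree at most n
  in a free algebra to finitely many scalar identities; longer words have coefficient 0 on both
  sides.\<close>

definition all_words_upto :: "nat \<Rightarrow> ('g list \<Rightarrow> bool) \<Rightarrow> bool" where
  "all_words_upto n P \<longleftrightarrow> (\<forall>l. P l)"

lemma all_words_upto_unfold:
  "0 < n \<Longrightarrow> all_words_upto n P \<longleftrightarrow> P [] \<and> (\<forall>x. all_words_upto (n - 1) (\<lambda>l. P (x # l)))"
  unfolding all_words_upto_def by (metis list.exhaust)

lemma all_words_upto_0: "all_words_upto 0 P \<longleftrightarrow> (\<forall>l. P l)"
  by (simp add: all_words_upto_def)

lemma freealg_eq_wordwise:
  "all_words_upto n (\<lambda>l. Poly_Mapping.lookup p (Word l) = Poly_Mapping.lookup r (Word l)) \<Longrightarrow> p = r"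
  unfolding all_words_upto_def by (rule poly_mapping_eqI) (metis word.exhaust)

lemma all_gABC: "(\<forall>x. P x) \<longleftrightarrow> P XA \<and> P XB \<and> P XC"
  by (metis gABC.exhaust)

lemma all_gABG: "(\<forall>x. P x) \<longleftrightarrow> P YA \<and> P YB \<and> P YG"
  by (metis gABG.exhaust)

lemmas word_coeff_simps = gen_def sc_def zero_word_def plus_word_def ring_distribs mult_single
  lookup_add lookup_minus lookup_single power2_eq_square power3_eq_cube
  all_words_upto_unfold all_words_upto_0 all_gABC all_gABG

text \<open>qi, s and k play the roles of q^-1, (q^2 - q^-2)^-1 and (q + q^-1)^-1; keeping them as
  variables tied to q by polynomial equations makes all identities below polynomial, so that
  the scalar goals are closed by the algebra method.\<close>

locale aw_parameters =
  fixes q qi s k :: "'k::field"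
  assumes q_qi: "q * qi = 1" and s_inv: "s * (q^2 - qi^2) = 1" and k_inv: "k * (q + qi) = 1"
begin

definition cent :: "('g, 'k) freealg \<Rightarrow> ('g, 'k) freealg \<Rightarrow> ('g, 'k) freealg \<Rightarrow> ('g, 'k) freealg" where
  "cent x y z = x + sc s * (sc q * y * z - sc qi * z * y)"

text \<open>cent_A, cent_B, cent_C are alpha, beta, gamma divided by q + q^-1.\<close>

abbreviation cent_A :: "(gABC, 'k) freealg" where "cent_A \<equiv> cent (gen XA) (gen XB) (gen XC)"
abbreviation cent_B :: "(gABC, 'k) freealg" where "cent_B \<equiv> cent (gen XB) (gen XC) (gen XA)"
abbreviation cent_C :: "(gABC, 'k) freealg" where "cent_C \<equiv> cent (gen XC) (gen XA) (gen XB)"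

definition tridiag :: "('g, 'k) freealg \<Rightarrow> ('g, 'k) freealg \<Rightarrow> ('g, 'k) freealg" where
  "tridiag x y = x^3 * y - sc (q^2 + 1 + qi^2) * x^2 * y * x + sc (q^2 + 1 + qi^2) * x * y * x^2
     - y * x^3 + sc ((q^2 - qi^2)^2) * (x * y - y * x)"

definition gamma_relation :: "('g, 'k) freealg \<Rightarrow> ('g, 'k) freealg \<Rightarrow> ('g, 'k) freealg \<Rightarrow> ('g, 'k) freealg" where
  "gamma_relation x y g = x^2 * y^2 - y^2 * x^2 + sc (q^2 + qi^2) * (y * x * y * x - x * y * x * y)
     + sc ((q - qi)^2) * (x * y - y * x) * g"

definition pres_relations :: "(gABG, 'k) freealg set" where
  "pres_relations = {tridiag (gen YA) (gen YB), tridiag (gen YB) (gen YA),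
     gamma_relation (gen YA) (gen YB) (gen YG), commut (gen YG) (gen YA), commut (gen YG) (gen YB)}"

definition delta_relations :: "(gABC, 'k) freealg set" where
  "delta_relations = {commut z (gen x) | z x. z \<in> {cent_A, cent_B, cent_C}}"

definition pres_to_delta :: "gABG \<Rightarrow> (gABC, 'k) freealg" where
  "pres_to_delta y = (case y of YA \<Rightarrow> gen XA | YB \<Rightarrow> gen XB | YG \<Rightarrow> sc (q + qi) * cent_C)"

definition C_via_gamma :: "(gABG, 'k) freealg" where
  "C_via_gamma = sc k * gen YG - sc s * (sc q * gen YA * gen YB - sc qi * gen YB * gen YA)"

definition delta_to_pres :: "gABC \<Rightarrow> (gABG, 'k) freealg" where
  "delta_to_pres x = (case x of XA \<Rightarrow> gen YA | XB \<Rightarrow> gen YB | XC \<Rightarrow> C_via_gamma)"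

lemma fsubst_cent: "fsubst \<sigma> (cent x y z) = cent (fsubst \<sigma> x) (fsubst \<sigma> y) (fsubst \<sigma> z)"
  by (simp add: cent_def fsubst_simps)

lemma fsubst_tridiag: "fsubst \<sigma> (tridiag x y) = tridiag (fsubst \<sigma> x) (fsubst \<sigma> y)"
  by (simp add: tridiag_def fsubst_simps)

lemma fsubst_gamma_relation:
  "fsubst \<sigma> (gamma_relation x y g) = gamma_relation (fsubst \<sigma> x) (fsubst \<sigma> y) (fsubst \<sigma> g)"
  by (simp add: gamma_relation_def fsubst_simps)

lemma pres_to_delta_C_via_gamma: "fsubst pres_to_delta C_via_gamma = gen XC"
proof -
  have "sc k * (sc (q + qi) * cent_C) - sc s * (sc q * gen XA * gen XB - sc qi * gen XB * gen XA) = gen XC"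
    unfolding cent_def
    by (rule freealg_eq_wordwise[where n = 3], simp add: word_coeff_simps, use k_inv in algebra)
  then show ?thesis
    by (simp add: C_via_gamma_def pres_to_delta_def fsubst_simps)
qed

lemma cent_C_via_gamma: "cent C_via_gamma (gen YA) (gen YB) = sc k * gen YG"
  unfolding cent_def C_via_gamma_def
  by (rule freealg_eq_wordwise[where n = 3], simp add: word_coeff_simps)

lemma delta_to_pres_gamma: "fsubst delta_to_pres (sc (q + qi) * cent_C) = gen YG"
proof -
  have "sc (q + qi) * sc k = (1 :: (gABG, 'k) freealg)"
    using k_inv by (simp add: sc_mult[symmetric] mult.commute)
  then show ?thesis
    by (simp add: fsubst_simps fsubst_cent delta_to_pres_def cent_C_via_gamma mult.assoc[symmetric])
qed

lemma tridiag_A_via_cent: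
  "tridiag (gen XA) (gen XB) =
     sc (q^2 - qi^2) * (sc q * commut cent_C (gen XA) * gen XA - sc qi * gen XA * commut cent_C (gen XA))
     - sc ((q^2 - qi^2)^2) * commut cent_B (gen XA)"
  unfolding tridiag_def cent_def commut_def
  by (rule freealg_eq_wordwise[where n = 5], simp add: word_coeff_simps, use q_qi s_inv in algebra)

lemma tridiag_B_via_cent:
  "tridiag (gen XB) (gen XA) =
     sc (q^2 - qi^2) * (sc q * gen XB * commut cent_C (gen XB) - sc qi * commut cent_C (gen XB) * gen XB)
     - sc ((q^2 - qi^2)^2) * commut cent_A (gen XB)"
  unfolding tridiag_def cent_def commut_def
  by (rule freealg_eq_wordwise[where n = 5], simp add: word_coeff_simps, use q_qi s_inv in algebra)

lemma gamma_relation_via_cent: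
  "gamma_relation (gen XA) (gen XB) (sc (q + qi) * cent_C) =
     sc (q^2 - qi^2) * (sc q * gen XB * commut cent_C (gen XA) - sc qi * commut cent_C (gen XA) * gen XB)
     + sc ((q^2 - qi^2) * qi) * (commut cent_C (gen XA) * gen XB + gen XA * commut cent_C (gen XB)
         - commut cent_C (gen XB) * gen XA - gen XB * commut cent_C (gen XA))
     - sc ((q^2 - qi^2)^2) * commut cent_A (gen XA)"
  unfolding gamma_relation_def cent_def commut_def
  by (rule freealg_eq_wordwise[where n = 5], simp add: word_coeff_simps, use q_qi s_inv in algebra)

lemma commut_cent_A_image_A:
  "commut (cent (gen YA) (gen YB) C_via_gamma) (gen YA) =
     sc (s * k) * (sc q * gen YB * commut (gen YG) (gen YA)
       - sc qi * (commut (gen YG) (gen YB * gen YA) - gen YA * commut (gen YG) (gen YB)))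
     - sc (s * s) * gamma_relation (gen YA) (gen YB) (gen YG)"
  unfolding gamma_relation_def cent_def C_via_gamma_def commut_def
  by (rule freealg_eq_wordwise[where n = 5], simp add: word_coeff_simps, use q_qi s_inv k_inv in algebra)

lemma commut_cent_A_image_B:
  "commut (cent (gen YA) (gen YB) C_via_gamma) (gen YB) =
     sc (s * k) * (sc q * gen YB * commut (gen YG) (gen YB) - sc qi * commut (gen YG) (gen YB) * gen YB)
     - sc (s * s) * tridiag (gen YB) (gen YA)"
  unfolding tridiag_def cent_def C_via_gamma_def commut_def
  by (rule freealg_eq_wordwise[where n = 5], simp add: word_coeff_simps, use q_qi s_inv k_inv in algebra)

lemma commut_cent_B_image_A:
  "commut (cent (gen YB) C_via_gamma (gen YA)) (gen YA) =
     sc (s * k) * (sc q * commut (gen YG) (gen YA) * gen YA - sc qi * gen YA * commut (gen YG) (gen YA))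
     - sc (s * s) * tridiag (gen YA) (gen YB)"
  unfolding tridiag_def cent_def C_via_gamma_def commut_def
  by (rule freealg_eq_wordwise[where n = 5], simp add: word_coeff_simps, use q_qi s_inv k_inv in algebra)

lemma commut_cent_B_image_B:
  "commut (cent (gen YB) C_via_gamma (gen YA)) (gen YB) =
     sc (s * k) * (sc q * (commut (gen YG) (gen YA * gen YB) - gen YB * commut (gen YG) (gen YA))
       - sc qi * gen YA * commut (gen YG) (gen YB))
     + sc (s * s) * gamma_relation (gen YA) (gen YB) (gen YG)"
  unfolding gamma_relation_def cent_def C_via_gamma_def commut_def
  by (rule freealg_eq_wordwise[where n = 5], simp add: word_coeff_simps, use q_qi s_inv k_inv in algebra)

lemma fsubst_inverse_maps:
  "fsubst pres_to_delta (fsubst delta_to_pres p) = p" "fsubst delta_to_pres (fsubst pres_to_delta r) = r"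
proof -
  have "(\<lambda>x. fsubst pres_to_delta (delta_to_pres x)) = gen"
  proof
    fix x show "fsubst pres_to_delta (delta_to_pres x) = gen x"
      by (cases x) (simp_all add: delta_to_pres_def pres_to_delta_def pres_to_delta_C_via_gamma fsubst_gen)
  qed
  then show "fsubst pres_to_delta (fsubst delta_to_pres p) = p"
    by (simp add: fsubst_fsubst fsubst_gen_id)
  have "(\<lambda>y. fsubst delta_to_pres (pres_to_delta y)) = gen"
  proof
    fix y show "fsubst delta_to_pres (pres_to_delta y) = gen y"
      by (cases y) (simp_all add: pres_to_delta_def delta_to_pres_def delta_to_pres_gamma fsubst_gen)
  qed
  then show "fsubst delta_to_pres (fsubst pres_to_delta r) = r"
    by (simp add: fsubst_fsubst fsubst_gen_id)
qed

lemma pres_to_delta_relations: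
  assumes "r \<in> pres_relations"
  shows "fsubst pres_to_delta r \<in> ideal_gen delta_relations"
proof -
  have cent: "commut z (gen x) \<in> ideal_gen delta_relations" if "z \<in> {cent_A, cent_B, cent_C}" for z x
    using that by (intro ideal_gen_generator) (auto simp: delta_relations_def)
  have gamma: "commut (sc (q + qi) * cent_C) (gen x) \<in> ideal_gen delta_relations" for x
    by (simp add: commut_sc_left cent ideal_gen_mult_left)
  have "fsubst pres_to_delta r \<in> {tridiag (gen XA) (gen XB), tridiag (gen XB) (gen XA),
      gamma_relation (gen XA) (gen XB) (sc (q + qi) * cent_C),
      commut (sc (q + qi) * cent_C) (gen XA), commut (sc (q + qi) * cent_C) (gen XB)}"
    using assms by (auto simp: pres_relations_def fsubst_simps fsubst_tridiag fsubst_gamma_relation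
        pres_to_delta_def)
  then show ?thesis
    unfolding tridiag_A_via_cent tridiag_B_via_cent gamma_relation_via_cent
    by (elim insertE emptyE; simp only:; blast intro: ideal_gen_closed cent gamma)
qed

lemma pres_relations_in_ideal:
  "tridiag (gen YA) (gen YB) \<in> ideal_gen pres_relations"
  "tridiag (gen YB) (gen YA) \<in> ideal_gen pres_relations"
  "gamma_relation (gen YA) (gen YB) (gen YG) \<in> ideal_gen pres_relations"
  "commut (gen YG) (gen YA) \<in> ideal_gen pres_relations"
  "commut (gen YG) (gen YB) \<in> ideal_gen pres_relations"
  by (rule ideal_gen_generator, simp add: pres_relations_def)+

lemma delta_to_pres_relations:
  assumes "d \<in> delta_relations"
  shows "fsubst delta_to_pres d \<in> ideal_gen pres_relations"
proof -
  let ?J = "ideal_gen pres_relations"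
  have gen_YG_central: "commut (gen YG) p \<in> ?J" for p
  proof (rule commut_in_ideal_gen_if_generators)
    fix y show "commut (gen YG) (gen y) \<in> ?J"
      by (cases y) (simp_all add: pres_relations_in_ideal ideal_gen.zero)
  qed
  have cent_A_image_central: "commut (cent (gen YA) (gen YB) C_via_gamma) p \<in> ?J" for p
  proof (rule commut_in_ideal_gen_if_generators)
    fix y show "commut (cent (gen YA) (gen YB) C_via_gamma) (gen y) \<in> ?J"
      by (cases y; simp only: commut_cent_A_image_A commut_cent_A_image_B;
          blast intro: ideal_gen_closed gen_YG_central pres_relations_in_ideal commut_in_ideal_gen_swap)
  qed
  have cent_B_image_central: "commut (cent (gen YB) C_via_gamma (gen YA)) p \<in> ?J" for p
  proof (rule commut_in_ideal_gen_if_generators)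
    fix y show "commut (cent (gen YB) C_via_gamma (gen YA)) (gen y) \<in> ?J"
      by (cases y; simp only: commut_cent_B_image_A commut_cent_B_image_B;
          blast intro: ideal_gen_closed gen_YG_central pres_relations_in_ideal commut_in_ideal_gen_swap)
  qed
  have cent_C_image_central: "commut (cent C_via_gamma (gen YA) (gen YB)) p \<in> ?J" for p
    by (simp add: cent_C_via_gamma commut_sc_left gen_YG_central ideal_gen_mult_left)
  from assms show ?thesis
    by (auto simp: delta_relations_def fsubst_simps fsubst_cent delta_to_pres_def
        cent_A_image_central cent_B_image_central cent_C_image_central)
qed

end

locale aw_field =
  fixes q :: "'k::field"
  assumes q_nonzero: "q \<noteq> 0" and q4_neq_1: "q ^ 4 \<noteq> 1"
begin

lemma q_sq_diff_nonzero: "q^2 - inverse q ^ 2 \<noteq> 0"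
proof
  assume "q^2 - inverse q ^ 2 = 0"
  have "q^4 = q^2 * q^2"
    by (simp flip: power_add)
  also have "\<dots> = q^2 * inverse q ^ 2"
    using \<open>q^2 - inverse q ^ 2 = 0\<close> by simp
  also have "\<dots> = 1"
    using q_nonzero by (simp flip: power_mult_distrib)
  finally show False using q4_neq_1 by simp
qed

lemma q_sq_diff_factor: "q^2 - inverse q ^ 2 = (q + inverse q) * (q - inverse q)"
  by (simp add: algebra_simps power2_eq_square)

lemma q_sum_nonzero: "q + inverse q \<noteq> 0" and q_diff_nonzero: "q - inverse q \<noteq> 0"
  using q_sq_diff_nonzero by (auto simp: q_sq_diff_factor)

end

sublocale aw_field \<subseteq> aw_parameters q "inverse q" "inverse (q^2 - inverse q ^ 2)" "inverse (q + inverse q)"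
  using q_nonzero q_sq_diff_nonzero q_sum_nonzero by unfold_locales simp_all

context aw_field
begin

lemma aw_cent_eq_cent: "aw_cent q = cent"
  by (intro ext) (simp add: aw_cent_def cent_def)

lemma qint_3: "qint q 3 = q^2 + 1 + inverse q ^ 2"
proof -
  have "q^3 - inverse q ^ 3 = (q - inverse q) * (q^2 + 1 + inverse q ^ 2)"
    using q_nonzero by (simp add: algebra_simps power2_eq_square power3_eq_cube)
  with q_diff_nonzero show ?thesis by (simp add: qint_def)
qed

lemma pres_rels_eq: "pres_rels q = pres_relations"
  by (simp add: pres_rels_def pres_relations_def tridiag_def gamma_relation_def commut_def qint_3 Let_def)

lemma delta_rels_eq: "delta_rels q = delta_relations"
  by (simp add: delta_rels_def delta_relations_def aw_cent_eq_cent)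

lemma pres_map_eq: "pres_map q = fsubst pres_to_delta"
proof -
  have "(\<lambda>y. case y of YA \<Rightarrow> gen XA | YB \<Rightarrow> gen XB | YG \<Rightarrow> aw_gamma q) = pres_to_delta"
    by (simp add: fun_eq_iff pres_to_delta_def aw_gamma_def aw_cent_eq_cent split: gABG.split)
  then show ?thesis by (simp add: pres_map_def)
qed

end

theorem theorem2p2:
  fixes q :: "'k::field"
  assumes "q \<noteq> 0" and "q ^ 4 \<noteq> 1"
  shows "(\<forall>p \<in> ideal_gen (pres_rels q). pres_map q p \<in> ideal_gen (delta_rels q))
       \<and> (\<forall>x :: (gABC, 'k) freealg. \<exists>p. x - pres_map q p \<in> ideal_gen (delta_rels q))
       \<and> (\<forall>p. pres_map q p \<in> ideal_gen (delta_rels q) \<longrightarrow> p \<in> ideal_gen (pres_rels q))"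
proof -
  interpret aw_field q
    using assms by unfold_locales
  have "x - fsubst pres_to_delta (fsubst delta_to_pres x) \<in> ideal_gen delta_relations" for x
    by (simp add: fsubst_inverse_maps ideal_gen.zero)
  moreover have "p \<in> ideal_gen pres_relations"
    if "fsubst pres_to_delta p \<in> ideal_gen delta_relations" for p
    using fsubst_ideal_gen[OF delta_to_pres_relations that] by (simp add: fsubst_inverse_maps)
  ultimately show ?thesis
    unfolding pres_rels_eq delta_rels_eq pres_map_eq
    using fsubst_ideal_gen[OF pres_to_delta_relations] by blast
qed

end
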